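(* Under the standing assumptions below, let $k\in\{0,\dots,n-1\}$ and $I(x_{k+1})=\{c_1,\dots,c_m\}$ with $c_1\prec\dots\prec c_m$. For every $j\le m$ and every $a:\mathrm{var}(c_j)\setminus X_k\to D$ such that all denominators below are nonzero, $$\prod_{i=1}^{j}\frac{w(I_k(c_i),a)}{w(I_k(c_i)\setminus\{c_i\},a)}=\frac{w(I_{k+1}(c_j),a)}{w(I_{k+1}(c_j)\setminus\{c_1,\dots,c_j\},a)}.$$
   Context: Standing assumptions: $I$ is a finite set of weighted constraints with default values on a finite domain $D$ (a constraint $c$ on variables $\mathrm{var}(c)$ is a pair $(f,\delta)$, $f:S\to\mathbb Q_{\ge0}$, $S\subseteq D^{\mathrm{var}(c)}$, $\delta\in\mathbb Q_{\ge0}$, inducing $c(a)=f(a)$ on $S$ and $\delta$ elsewhere) such that distinct constraints have distinct variable sets, $\mathcal H(I)=(\mathrm{var}(I),\{\mathrm{var}(c)\mid c\in I\})$ is $\beta$-acyclic, and $(x_1,\dots,x_n)$ is a $\beta$-elimination order of $\mathcal H(I)$ (an enumeration of $\mathrm{var}(I)$ such that for each $k$, $x_{k+1}$ is a nest point—the edges containing it are totally ordered by inclusion—of the hypergraph with vertices $\mathrm{var}(I)\setminus X_k$ and edges $\{e\setminus X_k\}\setminus\{\emptyset\}$). $X_k=\{x_1,\dots,x_k\}$. For $c,d\in I$: $c\prec d$ iff there is $k$ with $\mathrm{var}(c)\setminus X_k\subsetneq\mathrm{var}(d)\setminus X_k$; $c\preceq d$ iff $c\prec d$ or $c=d$. $\prec_0=\emptyset$;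 $c\prec_{k+1}d$ iff $c\prec_k d$ or there is $e\in I$ with $c\preceq_k e\prec d$ and $x_{k+1}\in\mathrm{var}(d)\cap\mathrm{var}(e)$; $c\preceq_k d$ iff $c=d$ or $c\prec_k d$. $I_k(c)=\{d\in I\mid d\preceq_k c\}$; $I(x)=\{c\in I\mid x\in\mathrm{var}(c)\}$. For $J\subseteq I$ and $a\in D^W$: $w(J,a)=\sum_{b\in D^{\mathrm{var}(J)},\,b\text{ agrees with }a\text{ on }W\cap\mathrm{var}(J)}\prod_{c\in J}c(b|_{\mathrm{var}(c)})$, with $w(\emptyset,a)=1$. *)

theory Defs
  imports Complex_Main "HOL-Library.FuncSet"
begin

text \<open>Weighted constraints with default values. Assignments are extensional
  functions: an element of D^W is an extensional function on W with values in D.\<close>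

record ('v, 'd) wconstr =
  cvars :: "'v set"                 
  csupp :: "('v \<Rightarrow> 'd) set"
  cfun  :: "('v \<Rightarrow> 'd) \<Rightarrow> rat"
  cdflt :: rat

definition wf_constr :: "'d set \<Rightarrow> ('v, 'd) wconstr \<Rightarrow> bool" where
  "wf_constr D c \<longleftrightarrow> finite (cvars c) \<and> csupp c \<subseteq> (cvars c \<rightarrow>\<^sub>E D)
     \<and> (\<forall>a\<in>csupp c. cfun c a \<ge> 0) \<and> cdflt c \<ge> 0"

definition ceval :: "('v, 'd) wconstr \<Rightarrow> ('v \<Rightarrow> 'd) \<Rightarrow> rat" where
  "ceval c b = (let a = restrict b (cvars c) in if a \<in> csupp c then cfun c a else cdflt c)"

definition varsI :: "('v, 'd) wconstr set \<Rightarrow> 'v set" where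
  "varsI J = \<Union> (cvars ` J)"

definition nest_point :: "'v set \<Rightarrow> 'v set set \<Rightarrow> 'v \<Rightarrow> bool" where
  "nest_point V E x \<longleftrightarrow> x \<in> V \<and>
     (\<forall>e1\<in>E. \<forall>e2\<in>E. x \<in> e1 \<and> x \<in> e2 \<longrightarrow> e1 \<subseteq> e2 \<or> e2 \<subseteq> e1)"

text \<open>beta-elimination order of a hypergraph (V,E), as a list (x_1,...,x_n):
 x(k+1) = xs!k, X(k) = set (take k xs).\<close>
definition beta_elim_order :: "'v set \<Rightarrow> 'v set set \<Rightarrow> 'v list \<Rightarrow> bool" where
  "beta_elim_order V E xs \<longleftrightarrow> distinct xs \<and> set xs = V \<and>
     (\<forall>k < length xs. nest_point (V - set (take k xs))
         ((\<lambda>e. e - set (take k xs)) ` E - {{}}) (xs ! k))"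

text \<open>beta-acyclicity: the hypergraph admits a beta-elimination order
  (the standard characterisation by successive removal of nest points).\<close>
definition beta_acyclic :: "'v set \<Rightarrow> 'v set set \<Rightarrow> bool" where
  "beta_acyclic V E \<longleftrightarrow> (\<exists>xs. beta_elim_order V E xs)"

definition hyp_edges :: "('v, 'd) wconstr set \<Rightarrow> 'v set set" where
  "hyp_edges I = cvars ` I"

definition cprec :: "'v list \<Rightarrow> ('v, 'd) wconstr \<Rightarrow> ('v, 'd) wconstr \<Rightarrow> bool" where
  "cprec xs c d \<longleftrightarrow> (\<exists>k \<le> length xs. cvars c - set (take k xs) \<subset> cvars d - set (take k xs))"

fun cprecK :: "('v, 'd) wconstr set \<Rightarrow> 'v list \<Rightarrow> nat \<Rightarrow> ('v, 'd) wconstr \<Rightarrow> ('v, 'd) wconstr \<Rightarrow> bool" where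
  "cprecK I xs 0 c d = False"
| "cprecK I xs (Suc k) c d \<longleftrightarrow> cprecK I xs k c d \<or>
     (\<exists>e\<in>I. (c = e \<or> cprecK I xs k c e) \<and> cprec xs e d \<and>
             xs ! k \<in> cvars d \<and> xs ! k \<in> cvars e)"

definition IK :: "('v, 'd) wconstr set \<Rightarrow> 'v list \<Rightarrow> nat \<Rightarrow> ('v, 'd) wconstr \<Rightarrow> ('v, 'd) wconstr set" where
  "IK I xs k c = {d \<in> I. d = c \<or> cprecK I xs k d c}"

definition Ix :: "('v, 'd) wconstr set \<Rightarrow> 'v \<Rightarrow> ('v, 'd) wconstr set" where
  "Ix I x = {c \<in> I. x \<in> cvars c}"

definition wJ :: "'d set \<Rightarrow> ('v, 'd) wconstr set \<Rightarrow> 'v set \<Rightarrow> ('v \<Rightarrow> 'd) \<Rightarrow> rat" where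
  "wJ D J W a = (\<Sum>b \<in> {b \<in> varsI J \<rightarrow>\<^sub>E D. \<forall>v \<in> W \<inter> varsI J. b v = a v}.
                    \<Prod>c\<in>J. ceval c b)"

end

theory Submission
  imports Defs
begin

(* Write G_l = I_k(c_l) for the constraints below c_l at stage k, U_i = G_0 \<union> ... \<union> G_(i-1)
   and C_i = {c_0, ..., c_(i-1)}.  The identity is proved by induction on i in the form
     \<Prod>_{l<i} w(G_l)/w(G_l - {c_l}) = w(U_i)/w(U_i - C_i),
   and for i = j the right-hand side is the claimed quotient because U_j = I_(k+1)(c_(j-1)). *)

section \<open>Factorisation of the weight over separated constraint sets\<close>

lemma ceval_restrict: "cvars c \<subseteq> V \<Longrightarrow> ceval c (restrict b V) = ceval c b"
  unfolding ceval_def by (simp add: inf.absorb2)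

lemma varsI_Un: "varsI (J1 \<union> J2) = varsI J1 \<union> varsI J2"
  unfolding varsI_def by auto

lemma varsI_mono: "J \<subseteq> J' \<Longrightarrow> varsI J \<subseteq> varsI J'"
  unfolding varsI_def by auto

lemma varsI_iff: "v \<in> varsI J \<longleftrightarrow> (\<exists>d\<in>J. v \<in> cvars d)"
  unfolding varsI_def by auto

lemma wJ_empty: "wJ D {} W a = 1"
  unfolding wJ_def varsI_def by simp

definition agreeing :: "'d set \<Rightarrow> 'v set \<Rightarrow> 'v set \<Rightarrow> ('v \<Rightarrow> 'd) \<Rightarrow> ('v \<Rightarrow> 'd) set" where
  "agreeing D V W a = {b \<in> V \<rightarrow>\<^sub>E D. \<forall>v \<in> W \<inter> V. b v = a v}"

lemma wJ_agreeing: "wJ D J W a = (\<Sum>b \<in> agreeing D (varsI J) W a. \<Prod>c\<in>J. ceval c b)"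
  unfolding wJ_def agreeing_def ..

lemma agreeing_split_bij:
  assumes sep: "V1 \<inter> V2 \<subseteq> W"
  shows "bij_betw (\<lambda>b. (restrict b V1, restrict b V2))
           (agreeing D (V1 \<union> V2) W a) (agreeing D V1 W a \<times> agreeing D V2 W a)"
    (is "bij_betw ?h ?A (?A1 \<times> ?A2)")
proof (rule bij_betw_imageI)
  show "inj_on ?h ?A"
  proof (rule inj_onI)
    fix b b' assume b: "b \<in> ?A" "b' \<in> ?A" and hb: "?h b = ?h b'"
    have "restrict b (V1 \<union> V2) = restrict b' (V1 \<union> V2)"
      using hb by (auto simp: fun_eq_iff restrict_def split: if_splits)
    moreover have "b \<in> extensional (V1 \<union> V2)" "b' \<in> extensional (V1 \<union> V2)"
      using b unfolding agreeing_def by (auto simp: PiE_def)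
    ultimately show "b = b'" by (simp add: extensional_restrict)
  qed
  show "?h ` ?A = ?A1 \<times> ?A2"
  proof
    show "?h ` ?A \<subseteq> ?A1 \<times> ?A2"
      unfolding agreeing_def by (auto simp: PiE_def Pi_def)
    show "?A1 \<times> ?A2 \<subseteq> ?h ` ?A"
    proof clarify
      fix b1 b2 assume b1: "b1 \<in> ?A1" and b2: "b2 \<in> ?A2"
      define b where "b = restrict (\<lambda>v. if v \<in> V1 then b1 v else b2 v) (V1 \<union> V2)"
      have "b \<in> ?A" using b1 b2 unfolding agreeing_def b_def by (auto simp: PiE_def Pi_def)
      moreover have "restrict b V1 = b1"
        using b1 unfolding agreeing_def b_def by (auto simp: PiE_def extensional_def fun_eq_iff)
      moreover have "restrict b V2 = b2"
        using b1 b2 sep unfolding agreeing_def b_def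
        by (auto simp: PiE_def extensional_def fun_eq_iff)
      ultimately show "(b1, b2) \<in> ?h ` ?A" by force
    qed
  qed
qed

lemma wJ_mult:
  fixes D :: "'d set" and J1 J2 :: "('v,'d) wconstr set" and a :: "'v \<Rightarrow> 'd"
  assumes fin: "finite J1" "finite J2" and disj: "J1 \<inter> J2 = {}"
    and sep: "varsI J1 \<inter> varsI J2 \<subseteq> W"
  shows "wJ D (J1 \<union> J2) W a = wJ D J1 W a * wJ D J2 W a"
proof -
  define V1 where "V1 = varsI J1"
  define V2 where "V2 = varsI J2"
  define F :: "('v,'d) wconstr set \<Rightarrow> ('v \<Rightarrow> 'd) \<Rightarrow> rat"
    where "F = (\<lambda>J b. \<Prod>c\<in>J. ceval c b)"
  have F_restrict: "F J (restrict b V) = F J b" if "varsI J \<subseteq> V" for J b V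
    unfolding F_def using that by (intro prod.cong refl ceval_restrict) (auto simp: varsI_def)
  have "wJ D J1 W a * wJ D J2 W a
        = (\<Sum>b1\<in>agreeing D V1 W a. F J1 b1) * (\<Sum>b2\<in>agreeing D V2 W a. F J2 b2)"
    unfolding wJ_agreeing F_def V1_def V2_def ..
  also have "\<dots> = (\<Sum>p\<in>agreeing D V1 W a \<times> agreeing D V2 W a. F J1 (fst p) * F J2 (snd p))"
    by (simp add: sum_product sum.cartesian_product case_prod_beta)
  also have "\<dots> = (\<Sum>b\<in>agreeing D (V1 \<union> V2) W a. F J1 (restrict b V1) * F J2 (restrict b V2))"
    using sum.reindex_bij_betw[OF agreeing_split_bij[of V1 V2 W D a],
        of "\<lambda>p. F J1 (fst p) * F J2 (snd p)"] sep
    unfolding V1_def V2_def by simp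
  also have "\<dots> = (\<Sum>b\<in>agreeing D (V1 \<union> V2) W a. F (J1 \<union> J2) b)"
  proof (rule sum.cong[OF refl])
    fix b
    have "F J1 (restrict b V1) = F J1 b" "F J2 (restrict b V2) = F J2 b"
      by (simp_all add: F_restrict V1_def V2_def)
    then show "F J1 (restrict b V1) * F J2 (restrict b V2) = F (J1 \<union> J2) b"
      unfolding F_def by (simp add: prod.union_disjoint[OF fin disj])
  qed
  also have "\<dots> = wJ D (J1 \<union> J2) W a"
    unfolding wJ_agreeing F_def V1_def V2_def varsI_Un ..
  finally show ?thesis by simp
qed

section \<open>The relations \<prec> and \<prec>_k along a \<beta>-elimination order\<close>

locale elim_order =
  fixes I :: "('v,'d) wconstr set" and xs :: "'v list"
  assumes inj: "inj_on cvars I"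
    and ord: "beta_elim_order (varsI I) (hyp_edges I) xs"
begin

abbreviation scope :: "nat \<Rightarrow> ('v,'d) wconstr \<Rightarrow> 'v set" where
  "scope k c \<equiv> cvars c - set (take k xs)"

lemma notin_take: "p < length xs \<Longrightarrow> xs ! p \<notin> set (take p xs)"
  using ord unfolding beta_elim_order_def
  by (metis distinct_take id_take_nth_drop not_distinct_conv_prefix)

lemma set_take_Suc: "p < length xs \<Longrightarrow> set (take (Suc p) xs) = insert (xs ! p) (set (take p xs))"
  by (simp add: take_Suc_conv_app_nth)

lemma set_take_mono: "m \<le> m' \<Longrightarrow> set (take m xs) \<subseteq> set (take m' xs)"
  by (simp add: set_take_subset_set_take)

lemma scopes_nested:
  assumes "p < length xs" "c \<in> I" "d \<in> I" "xs ! p \<in> cvars c" "xs ! p \<in> cvars d"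
  shows "scope p c \<subseteq> scope p d \<or> scope p d \<subseteq> scope p c"
proof -
  have np: "nest_point (varsI I - set (take p xs))
         ((\<lambda>e. e - set (take p xs)) ` hyp_edges I - {{}}) (xs ! p)"
    using ord assms(1) unfolding beta_elim_order_def by auto
  have "xs ! p \<notin> set (take p xs)" using notin_take assms(1) .
  hence "scope p c \<in> (\<lambda>e. e - set (take p xs)) ` hyp_edges I - {{}}"
        "scope p d \<in> (\<lambda>e. e - set (take p xs)) ` hyp_edges I - {{}}"
        "xs ! p \<in> scope p c" "xs ! p \<in> scope p d"
    using assms unfolding hyp_edges_def by auto
  thus ?thesis using np unfolding nest_point_def by blast
qed

lemma scope_subset_later:
  fixes m m' :: nat and c d :: "('v,'d) wconstr"
  shows "scope m c \<subseteq> scope m d \<Longrightarrow> m \<le> m' \<Longrightarrow> scope m' c \<subseteq> scope m' d"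
  using set_take_mono[of m m'] by blast

lemma cprec_trans:
  fixes c d e :: "('v,'d) wconstr"
  assumes cd: "cprec xs c d" and de: "cprec xs d e"
  shows "cprec xs c e"
proof -
  obtain m where m: "m \<le> length xs" "scope m c \<subset> scope m d"
    using cd unfolding cprec_def by auto
  obtain m' where m': "m' \<le> length xs" "scope m' d \<subset> scope m' e"
    using de unfolding cprec_def by auto
  show ?thesis
  proof (cases "m \<le> m'")
    case True
    hence "scope m' c \<subset> scope m' e"
      using scope_subset_later[where m=m and m'=m' and c=c and d=d] m(2) m'(2) by blast
    thus ?thesis using m'(1) unfolding cprec_def by blast
  next
    case False
    hence "scope m c \<subset> scope m e"
      using scope_subset_later[where m=m' and m'=m and c=d and d=e] m(2) m'(2) by auto
    thus ?thesis using m(1) unfolding cprec_def by blast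
  qed
qed

lemma cprec_irrefl: "\<not> cprec xs (c::('v,'d) wconstr) c"
  unfolding cprec_def by auto

lemma cprec_asym: "cprec xs (c::('v,'d) wconstr) d \<Longrightarrow> \<not> cprec xs d c"
  using cprec_trans cprec_irrefl by blast

lemma cprec_scope:
  assumes "k < length xs" "c \<in> I" "d \<in> I" "xs ! k \<in> cvars c" "xs ! k \<in> cvars d"
    and "cprec xs c d"
  shows "scope k c \<subseteq> scope k d"
proof (rule ccontr)
  assume "\<not> scope k c \<subseteq> scope k d"
  hence strict: "scope k d \<subset> scope k c" using scopes_nested[OF assms(1-5)] by blast
  obtain m where m: "scope m c \<subset> scope m d"
    using assms(6) unfolding cprec_def by auto
  show False
  proof (cases "m \<le> k")
    case True
    then show False using scope_subset_later[where m=m and m'=k and c=c and d=d] m strict by blast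
  next
    case False
    then show False using scope_subset_later[where m=k and m'=m and c=d and d=c] m strict by auto
  qed
qed

lemma cprecK_mono: "k \<le> k' \<Longrightarrow> cprecK I xs k c d \<Longrightarrow> cprecK I xs k' c d"
  by (induction k' rule: dec_induct) auto

lemma cprecK_cprec: "cprecK I xs k c d \<Longrightarrow> cprec xs c d"
  by (induction k arbitrary: c d) (auto intro: cprec_trans)

lemma cprecK_SucE:
  assumes "cprecK I xs (Suc k) d c"
  obtains "cprecK I xs k d c"
    | e where "e \<in> I" "d = e \<or> cprecK I xs k d e" "cprec xs e c"
        "xs ! k \<in> cvars c" "xs ! k \<in> cvars e"
  using assms by auto

lemma cprecK_scope:
  "k \<le> length xs \<Longrightarrow> c \<in> I \<Longrightarrow> cprecK I xs k d c \<Longrightarrow> scope k d \<subseteq> scope k c"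
proof (induction k arbitrary: d c)
  case 0 then show ?case by simp
next
  case (Suc k)
  have kl: "k < length xs" using Suc.prems by simp
  have later: "scope k d \<subseteq> scope k c \<Longrightarrow> scope (Suc k) d \<subseteq> scope (Suc k) c"
    using scope_subset_later[where m=k and m'="Suc k" and c=d and d=c] by simp
  from Suc.prems(3) show ?case
  proof (cases rule: cprecK_SucE)
    case 1
    then show ?thesis using Suc later by simp
  next
    case (2 e)
    have "scope k e \<subseteq> scope k c" using cprec_scope[OF kl 2(1) Suc.prems(2) 2(5,4,3)] .
    moreover have "scope k d \<subseteq> scope k e" using 2(2) Suc.IH[of e d] kl 2(1) by auto
    ultimately show ?thesis using later by blast
  qed
qed

lemma cprecK_keeps_var:
  assumes "k < length xs" "c \<in> I" "cprecK I xs k d c" "xs ! k \<in> cvars d"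
  shows "xs ! k \<in> cvars c"
  using cprecK_scope[of k c d] assms notin_take[of k] by auto

lemma cprecK_trans:
  "k \<le> length xs \<Longrightarrow> c \<in> I \<Longrightarrow> cprecK I xs k d e \<Longrightarrow> cprecK I xs k e c \<Longrightarrow> cprecK I xs k d c"
proof (induction k arbitrary: d e c)
  case 0 then show ?case by simp
next
  case (Suc k)
  have kl: "k < length xs" using Suc.prems by simp
  from Suc.prems(4) show ?case
  proof (cases rule: cprecK_SucE)
    case ec: 1
    from Suc.prems(3) show ?thesis
    proof (cases rule: cprecK_SucE)
      case 1
      then show ?thesis using Suc.IH[of c d e] Suc.prems ec by simp
    next
      case (2 g)
      have "xs ! k \<in> cvars c" using cprecK_keeps_var[OF kl Suc.prems(2) ec 2(4)] .
      moreover have "cprec xs g c" using 2(3) cprecK_cprec[OF ec] cprec_trans by blast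
      ultimately show ?thesis using 2 by auto
    qed
  next
    case (2 h)
    from Suc.prems(3) show ?thesis
    proof (cases rule: cprecK_SucE)
      case 1
      have "cprecK I xs k d h" using 2(2) 1 Suc.IH[of h d e] kl 2(1) by auto
      then show ?thesis using 2 by auto
    next
      case (2 g)
      have "cprec xs e h \<or> e = h" using \<open>e = h \<or> cprecK I xs k e h\<close> cprecK_cprec by blast
      hence "cprec xs g c" using 2(3) \<open>cprec xs h c\<close> cprec_trans by blast
      then show ?thesis using 2 \<open>xs ! k \<in> cvars c\<close> by auto
    qed
  qed
qed

text \<open>Distinct constraints with equal scopes at some stage are \<prec>-comparable (at stage 0
  this is injectivity of cvars; a variable eliminated later separates the scopes).\<close>

lemma equal_scope_cprec:
  "k \<le> length xs \<Longrightarrow> c \<in> I \<Longrightarrow> d \<in> I \<Longrightarrow> c \<noteq> d \<Longrightarrow> scope k c = scope k d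
   \<Longrightarrow> cprec xs c d \<or> cprec xs d c"
proof (induction k)
  case 0
  then show ?case using inj by (simp add: inj_on_def)
next
  case (Suc k)
  show ?case
  proof (cases "scope k c = scope k d")
    case True
    then show ?thesis using Suc by simp
  next
    case False
    have kl: "k < length xs" using Suc.prems by simp
    have "scope k c = scope (Suc k) c \<union> ({xs ! k} \<inter> cvars c)"
         "scope k d = scope (Suc k) d \<union> ({xs ! k} \<inter> cvars d)"
      using set_take_Suc[OF kl] notin_take[OF kl] by auto
    hence "scope k c \<subset> scope k d \<or> scope k d \<subset> scope k c" using False Suc.prems(5) by auto
    then show ?thesis using kl unfolding cprec_def by (meson less_imp_le)
  qed
qed

lemma shared_var_cprecK:
  assumes "p < length xs" "c \<in> I" "d \<in> I" "c \<noteq> d" "xs ! p \<in> cvars c" "xs ! p \<in> cvars d"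
  shows "cprecK I xs (Suc p) c d \<or> cprecK I xs (Suc p) d c"
proof -
  have "scope p c \<subset> scope p d \<or> scope p d \<subset> scope p c \<or> scope p c = scope p d"
    using scopes_nested[OF assms(1,2,3,5,6)] by blast
  then have "cprec xs c d \<or> cprec xs d c"
    using equal_scope_cprec[of p c d] assms unfolding cprec_def by (meson less_imp_le)
  then show ?thesis using assms by auto
qed

lemma shared_eliminated_cprecK:
  assumes "k \<le> length xs" "c \<in> I" "d \<in> I" "c \<noteq> d" "y \<in> cvars c" "y \<in> cvars d"
    "y \<in> set (take k xs)"
  shows "cprecK I xs k c d \<or> cprecK I xs k d c"
proof -
  obtain p where p: "p < k" "p < length xs" "y = xs ! p"
    using assms(7) by (auto simp: in_set_conv_nth)
  have "cprecK I xs (Suc p) c d \<or> cprecK I xs (Suc p) d c"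
    using shared_var_cprecK[OF p(2) assms(2-4)] assms(5,6) p(3) by auto
  then show ?thesis using cprecK_mono[of "Suc p" k] p by auto
qed

text \<open>The inductive step of the forest property below: a \<prec>_k-successor a and a new
  \<prec>_(k+1)-successor b of d (obtained through g) are \<prec>_(k+1)-comparable, provided a and g
  are \<prec>_k-comparable whenever both are \<prec>_k-successors of d.\<close>

lemma forest_step:
  assumes kl: "k < length xs"
    and comparable: "cprecK I xs k d g \<Longrightarrow> a \<noteq> g \<Longrightarrow> cprecK I xs k a g \<or> cprecK I xs k g a"
    and ab: "a \<in> I" "b \<in> I" "a \<noteq> b" and da: "cprecK I xs k d a"
    and g: "g \<in> I" "d = g \<or> cprecK I xs k d g" "cprec xs g b" "xs ! k \<in> cvars b" "xs ! k \<in> cvars g"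
  shows "cprecK I xs (Suc k) a b \<or> cprecK I xs (Suc k) b a"
proof -
  have via_var: ?thesis if "xs ! k \<in> cvars a"
    using shared_var_cprecK[OF kl ab] that g(4) by blast
  have "a = g \<or> cprecK I xs k a g \<or> xs ! k \<in> cvars a"
  proof (cases "d = g")
    case True
    then show ?thesis using cprecK_keeps_var[OF kl ab(1) da] g(5) by blast
  next
    case False
    hence "a = g \<or> cprecK I xs k a g \<or> cprecK I xs k g a"
      using comparable g(2) by blast
    then show ?thesis using cprecK_keeps_var[OF kl ab(1)] g(5) by blast
  qed
  then show ?thesis using via_var g by auto
qed

lemma cprecK_forest:
  "k \<le> length xs \<Longrightarrow> a \<in> I \<Longrightarrow> b \<in> I \<Longrightarrow> a \<noteq> b \<Longrightarrow> cprecK I xs k d a \<Longrightarrow> cprecK I xs k d b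
   \<Longrightarrow> cprecK I xs k a b \<or> cprecK I xs k b a"
proof (induction k arbitrary: d a b)
  case 0 then show ?case by simp
next
  case (Suc k)
  have kl: "k < length xs" using Suc.prems by simp
  from Suc.prems(5) show ?case
  proof (cases rule: cprecK_SucE)
    case da: 1
    from Suc.prems(6) show ?thesis
    proof (cases rule: cprecK_SucE)
      case 1
      then show ?thesis using Suc.IH[of a b d] Suc.prems da kl by auto
    next
      case (2 g)
      have "cprecK I xs k d g \<Longrightarrow> a \<noteq> g \<Longrightarrow> cprecK I xs k a g \<or> cprecK I xs k g a"
        using Suc.IH[of a g d] kl Suc.prems(2) 2(1) da by auto
      then show ?thesis using forest_step[OF kl _ Suc.prems(2-4) da 2] by blast
    qed
  next
    case (2 g)
    from Suc.prems(6) show ?thesis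
    proof (cases rule: cprecK_SucE)
      case db: 1
      have "cprecK I xs k d g \<Longrightarrow> b \<noteq> g \<Longrightarrow> cprecK I xs k b g \<or> cprecK I xs k g b"
        using Suc.IH[of b g d] kl Suc.prems(3) 2(1) db by auto
      then show ?thesis
        using forest_step[OF kl _ Suc.prems(3,2) Suc.prems(4)[symmetric] db 2] by blast
    next
      case 2
      then show ?thesis using shared_var_cprecK[OF kl Suc.prems(2-4)] \<open>xs ! k \<in> cvars a\<close> by blast
    qed
  qed
qed

end

section \<open>The chain of constraints containing x_(k+1)\<close>

text \<open>cs = c_0, ..., c_(m-1) enumerates I(x_(k+1)) along \<prec>.  The layer of c_l is the set
  I_k(c_l), and below i is the union of the first i layers.\<close>

locale nest_chain = elim_order I xs
  for I :: "('v,'d) wconstr set" and xs :: "'v list" +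
  fixes k :: nat and cs :: "('v,'d) wconstr list"
  assumes finI: "finite I"
    and k: "k < length xs"
    and cs_set: "set cs = Ix I (xs ! k)"
    and cs_dist: "distinct cs"
    and cs_chain: "\<forall>i. Suc i < length cs \<longrightarrow> cprec xs (cs ! i) (cs ! Suc i)"
begin

definition layer :: "nat \<Rightarrow> ('v,'d) wconstr set" where
  "layer l = IK I xs k (cs ! l)"

definition below :: "nat \<Rightarrow> ('v,'d) wconstr set" where
  "below i = (\<Union>l<i. layer l)"

lemma cs_mem: "l < length cs \<Longrightarrow> cs ! l \<in> I \<and> xs ! k \<in> cvars (cs ! l)"
  using nth_mem[of l cs] cs_set unfolding Ix_def by auto

lemma Ix_in_cs:
  assumes "d \<in> I" "xs ! k \<in> cvars d"
  shows "\<exists>p<length cs. d = cs ! p"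
proof -
  have "d \<in> set cs" using assms cs_set unfolding Ix_def by auto
  then show ?thesis by (metis in_set_conv_nth)
qed

lemma cs_cprec: "i < l \<Longrightarrow> l < length cs \<Longrightarrow> cprec xs (cs ! i) (cs ! l)"
proof (induction l)
  case 0 then show ?case by simp
next
  case (Suc l)
  have "cprec xs (cs ! l) (cs ! Suc l)" using cs_chain Suc.prems by auto
  then show ?case using Suc cprec_trans by (cases "i = l") auto
qed

lemma cs_cprec_index:
  "p < length cs \<Longrightarrow> q < length cs \<Longrightarrow> cprec xs (cs ! p) (cs ! q) \<Longrightarrow> p < q"
  using cs_cprec[of q p] cprec_asym cprec_irrefl by (metis linorder_neqE_nat)

lemma layer_subset: "layer l \<subseteq> I"
  unfolding layer_def IK_def by auto

lemma layer_mem: "d \<in> layer l \<Longrightarrow> d \<in> I \<and> (d = cs ! l \<or> cprecK I xs k d (cs ! l))"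
  unfolding layer_def IK_def by auto

lemma cs_in_layer: "l < length cs \<Longrightarrow> cs ! l \<in> layer l"
  using cs_mem unfolding layer_def IK_def by auto

lemma finite_subset_I: "J \<subseteq> I \<Longrightarrow> finite J"
  using finite_subset finI by blast

lemma layer_scope:
  assumes "i \<le> l" "l < length cs" "d \<in> layer i"
  shows "scope k d \<subseteq> scope k (cs ! l)"
proof -
  have il: "i < length cs" using assms by simp
  have "scope k (cs ! i) \<subseteq> scope k (cs ! l)"
  proof (cases "i = l")
    case False
    then show ?thesis using cprec_scope[OF k, of "cs ! i" "cs ! l"] cs_cprec[of i l] cs_mem il assms
      by auto
  qed simp
  moreover have "scope k d \<subseteq> scope k (cs ! i)"
    using layer_mem[OF assms(3)] cprecK_scope[of k "cs ! i" d] cs_mem[OF il] k by auto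
  ultimately show ?thesis by blast
qed

lemma later_not_below:
  assumes "i < length cs" "l < i"
  shows "cs ! i \<notin> layer l" and "\<not> cprecK I xs k (cs ! i) (cs ! l)"
proof -
  have "cs ! i \<noteq> cs ! l" using cs_dist assms nth_eq_iff_index_eq by fastforce
  moreover have "\<not> cprecK I xs k (cs ! i) (cs ! l)"
    using cprecK_cprec cs_cprec_index[of i l] assms by fastforce
  ultimately show "cs ! i \<notin> layer l" "\<not> cprecK I xs k (cs ! i) (cs ! l)"
    using layer_mem by blast+
qed

lemma leaving_separated:
  assumes il: "i < length cs" "l < i"
    and d: "d \<in> layer l" "d \<notin> layer i" and d': "d' \<in> layer i"
    and y: "y \<in> cvars d" "y \<in> cvars d'"
  shows "y \<notin> set (take k xs)"
proof
  assume yX: "y \<in> set (take k xs)"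
  have ll: "l < length cs" using il by simp
  have dI: "d \<in> I" "d' \<in> I" using layer_mem d d' by auto
  have "d \<noteq> d'" using d d' by auto
  hence cc: "cprecK I xs k d d' \<or> cprecK I xs k d' d"
    using shared_eliminated_cprecK[OF _ dI \<open>d \<noteq> d'\<close> y yX] k by auto
  have dl: "d = cs ! l \<or> cprecK I xs k d (cs ! l)" using layer_mem d(1) by blast
  have not_i_d: "\<not> cprecK I xs k (cs ! i) d"
    using dl cprecK_trans[of k "cs ! l"] later_not_below(2)[OF il] cs_mem[OF ll] k by auto
  have d'i: "d' = cs ! i \<or> cprecK I xs k d' (cs ! i)" using layer_mem d' by blast
  have d_not_i: "\<not> cprecK I xs k d (cs ! i)" using d(2) dI unfolding layer_def IK_def by auto
  show False
  proof (cases "cprecK I xs k d d'")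
    case True
    then show False using d'i d_not_i cprecK_trans[of k "cs ! i"] cs_mem[OF il(1)] k by auto
  next
    case False
    hence dd: "cprecK I xs k d' d" using cc by blast
    have "d \<noteq> cs ! i" using d(2) cs_in_layer il by auto
    hence "d' \<noteq> cs ! i \<Longrightarrow> cprecK I xs k d (cs ! i) \<or> cprecK I xs k (cs ! i) d"
      using cprecK_forest[of k d "cs ! i" d'] dI cs_mem[OF il(1)] dd d'i k by auto
    then show False using d'i dd not_i_d d_not_i by blast
  qed
qed

lemma entering_separated:
  assumes il: "i < length cs" "l < i"
    and d: "d \<in> layer l" "d \<in> layer i"
    and d': "d' \<in> layer i" "d' \<noteq> cs ! i" "d' \<notin> below i"
    and y: "y \<in> cvars d" "y \<in> cvars d'"
  shows "y \<notin> set (take k xs)"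
proof
  assume yX: "y \<in> set (take k xs)"
  have ll: "l < length cs" using il by simp
  have dI: "d \<in> I" "d' \<in> I" using layer_mem d d' by auto
  have d'l: "d' \<notin> layer l" using d'(3) il(2) unfolding below_def by blast
  hence "d \<noteq> d'" using d by auto
  hence cc: "cprecK I xs k d d' \<or> cprecK I xs k d' d"
    using shared_eliminated_cprecK[OF _ dI \<open>d \<noteq> d'\<close> y yX] k by auto
  have dl: "d = cs ! l \<or> cprecK I xs k d (cs ! l)" using layer_mem d(1) by blast
  have not_d'l: "\<not> cprecK I xs k d' (cs ! l)" using d'l dI unfolding layer_def IK_def by auto
  have d'i: "cprecK I xs k d' (cs ! i)" using layer_mem d'(1,2) by blast
  have "\<not> cprecK I xs k d' d"
    using dl not_d'l cprecK_trans[of k "cs ! l"] cs_mem[OF ll] k by auto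
  hence dd: "cprecK I xs k d d'" using cc by blast
  have ld': "cprecK I xs k (cs ! l) d'"
  proof (cases "d = cs ! l")
    case False
    hence h: "cprecK I xs k d (cs ! l)" using dl by blast
    have "d' \<noteq> cs ! l" using d'l cs_in_layer ll by auto
    hence "cprecK I xs k (cs ! l) d' \<or> cprecK I xs k d' (cs ! l)"
      using cprecK_forest[of k "cs ! l" d' d] cs_mem[OF ll] dI h dd k by auto
    thus ?thesis using not_d'l by blast
  qed (use dd in simp)
  have "xs ! k \<in> cvars d'" using cprecK_keeps_var[OF k dI(2) ld'] cs_mem[OF ll] by simp
  then obtain p where p: "p < length cs" "d' = cs ! p" using Ix_in_cs dI by blast
  have "l < p" using cs_cprec_index[OF ll p(1)] cprecK_cprec[OF ld'] p by simp
  moreover have "p < i" using cs_cprec_index[OF p(1) il(1)] cprecK_cprec[OF d'i] p by simp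
  ultimately show False using d'(3) cs_in_layer[OF p(1)] p(2) unfolding below_def by blast
qed

lemma below_subset: "below i \<subseteq> I"
  unfolding below_def using layer_subset by auto

lemma below_Suc: "below (Suc i) = below i \<union> layer i"
  unfolding below_def by (auto simp: lessThan_Suc)

lemma prefix_subset_below:
  assumes "i \<le> length cs"
  shows "set (take i cs) \<subseteq> below i"
proof
  fix c assume "c \<in> set (take i cs)"
  then obtain p where "p < i" "c = cs ! p" by (auto simp: in_set_conv_nth)
  then show "c \<in> below i" using cs_in_layer[of p] assms unfolding below_def by auto
qed

text \<open>The two separation properties that make the weights factorise, relative to any
  set of fixed variables containing the scope of c_l: the part of below i outside layer i
  is separated from layer i, and the part of layer i already below is separated from the
  part entering at stage i.\<close>

lemma old_new_separated:
  assumes "i \<le> l" "l < length cs"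
  shows "varsI (below i - layer i) \<inter> varsI (layer i) \<subseteq> scope k (cs ! l)"
proof
  fix v assume "v \<in> varsI (below i - layer i) \<inter> varsI (layer i)"
  then obtain d d' p where "p < i" "d \<in> layer p" "d \<notin> layer i" "d' \<in> layer i"
      "v \<in> cvars d" "v \<in> cvars d'"
    by (auto simp: varsI_iff below_def)
  with assms show "v \<in> scope k (cs ! l)"
    using leaving_separated[of i p d d' v] layer_scope[of i l d'] by auto
qed

lemma shared_entering_separated:
  assumes "i \<le> l" "l < length cs"
  shows "varsI (below i \<inter> layer i) \<inter> varsI (layer i - {cs ! i} - below i) \<subseteq> scope k (cs ! l)"
proof
  fix v assume "v \<in> varsI (below i \<inter> layer i) \<inter> varsI (layer i - {cs ! i} - below i)"
  then obtain d d' p where "p < i" "d \<in> layer p" "d \<in> layer i" "d' \<in> layer i" "d' \<noteq> cs ! i"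
      "d' \<notin> below i" "v \<in> cvars d" "v \<in> cvars d'"
    by (auto simp: varsI_iff below_def)
  with assms show "v \<in> scope k (cs ! l)"
    using entering_separated[of i p d d' v] layer_scope[of i l d'] by auto
qed

lemma layer_factorisation:
  assumes il: "i \<le> l" "l < length cs" and W: "scope k (cs ! l) \<subseteq> W"
  obtains P Q R where
    "wJ D (below (Suc i)) W a = wJ D Q W a * wJ D (layer i) W a"
    "wJ D (below i) W a = wJ D Q W a * wJ D P W a"
    "wJ D (layer i - {cs ! i}) W a = wJ D P W a * wJ D R W a"
    "wJ D (below (Suc i) - set (take (Suc i) cs)) W a
       = wJ D (below i - set (take i cs)) W a * wJ D R W a"
proof -
  define P where "P = below i \<inter> layer i"
  define Q where "Q = below i - layer i"
  define R where "R = layer i - {cs ! i} - below i"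
  have fin: "finite P" "finite Q" "finite R" "finite (layer i)" "finite (below i - set (take i cs))"
    unfolding P_def Q_def R_def using finite_subset_I layer_subset below_subset by blast+
  have ci: "cs ! i \<notin> below i"
    using later_not_below(1)[of i] il unfolding below_def by auto
  have sepQ: "varsI Q \<inter> varsI (layer i) \<subseteq> W"
    using old_new_separated[OF il] W unfolding Q_def by blast
  have sepPR: "varsI P \<inter> varsI R \<subseteq> W"
    using shared_entering_separated[OF il] W unfolding P_def R_def by blast
  have "P \<subseteq> layer i" "R \<subseteq> layer i" unfolding P_def R_def by auto
  hence PR: "varsI P \<subseteq> varsI (layer i)" "varsI R \<subseteq> varsI (layer i)" by (simp_all add: varsI_mono)
  have U': "wJ D (below (Suc i)) W a = wJ D Q W a * wJ D (layer i) W a"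
  proof -
    have eq: "below (Suc i) = Q \<union> layer i" and disj: "Q \<inter> layer i = {}"
      unfolding below_Suc Q_def by auto
    show ?thesis unfolding eq by (rule wJ_mult[OF fin(2,4) disj sepQ])
  qed
  have U: "wJ D (below i) W a = wJ D Q W a * wJ D P W a"
  proof -
    have eq: "below i = Q \<union> P" and disj: "Q \<inter> P = {}" unfolding Q_def P_def by auto
    have sep: "varsI Q \<inter> varsI P \<subseteq> W" using sepQ PR(1) by blast
    show ?thesis unfolding eq by (rule wJ_mult[OF fin(2,1) disj sep])
  qed
  have G: "wJ D (layer i - {cs ! i}) W a = wJ D P W a * wJ D R W a"
  proof -
    have eq: "layer i - {cs ! i} = P \<union> R" and disj: "P \<inter> R = {}"
      unfolding P_def R_def using ci by auto
    show ?thesis unfolding eq by (rule wJ_mult[OF fin(1,3) disj sepPR])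
  qed
  have C: "wJ D (below (Suc i) - set (take (Suc i) cs)) W a
        = wJ D (below i - set (take i cs)) W a * wJ D R W a"
  proof -
    have taken: "set (take (Suc i) cs) = insert (cs ! i) (set (take i cs))"
      using il by (simp add: take_Suc_conv_app_nth)
    have "set (take i cs) \<subseteq> below i" using prefix_subset_below il by simp
    hence eq: "below (Suc i) - set (take (Suc i) cs) = (below i - set (take i cs)) \<union> R"
      and disj: "(below i - set (take i cs)) \<inter> R = {}"
      unfolding below_Suc taken R_def using ci by auto
    have "varsI (below i - set (take i cs)) \<subseteq> varsI Q \<union> varsI P"
      unfolding Q_def P_def varsI_Un[symmetric] by (rule varsI_mono) auto
    hence sep: "varsI (below i - set (take i cs)) \<inter> varsI R \<subseteq> W" using sepQ sepPR PR by blast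
    show ?thesis unfolding eq by (rule wJ_mult[OF fin(5,3) disj sep])
  qed
  show thesis by (rule that[OF U' U G C])
qed

lemma telescope:
  assumes "i \<le> Suc l" "l < length cs" "scope k (cs ! l) \<subseteq> W"
    and "\<forall>p<i. wJ D (layer p - {cs ! p}) W a \<noteq> 0"
    and "wJ D (below i - set (take i cs)) W a \<noteq> 0"
  shows "(\<Prod>p<i. wJ D (layer p) W a / wJ D (layer p - {cs ! p}) W a)
         = wJ D (below i) W a / wJ D (below i - set (take i cs)) W a"
  using assms
proof (induction i)
  case 0
  then show ?case by (simp add: below_def wJ_empty)
next
  case (Suc i)
  have il: "i \<le> l" using Suc.prems(1) by simp
  obtain P Q R where
    U': "wJ D (below (Suc i)) W a = wJ D Q W a * wJ D (layer i) W a" and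
    U: "wJ D (below i) W a = wJ D Q W a * wJ D P W a" and
    G: "wJ D (layer i - {cs ! i}) W a = wJ D P W a * wJ D R W a" and
    C: "wJ D (below (Suc i) - set (take (Suc i) cs)) W a
        = wJ D (below i - set (take i cs)) W a * wJ D R W a"
    by (rule layer_factorisation[OF il Suc.prems(2,3), where D=D and a=a])
  have nz: "wJ D (below i - set (take i cs)) W a \<noteq> 0" "wJ D P W a \<noteq> 0" "wJ D R W a \<noteq> 0"
    using Suc.prems(4,5) C G by auto
  have IH: "(\<Prod>p<i. wJ D (layer p) W a / wJ D (layer p - {cs ! p}) W a)
            = wJ D (below i) W a / wJ D (below i - set (take i cs)) W a"
    using Suc.IH Suc.prems nz(1) by simp
  show ?case
    unfolding prod.lessThan_Suc IH U' U G C using nz by (simp add: field_simps)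
qed

text \<open>The first l+1 layers make up I_(k+1)(c_l): by definition of \<prec>_(k+1) the new
  relations at stage k+1 below c_l pass through some c_p \<prec> c_l, which contains x_(k+1).\<close>

lemma IK_Suc_eq_below:
  assumes l: "l < length cs"
  shows "IK I xs (Suc k) (cs ! l) = below (Suc l)"
proof
  show "IK I xs (Suc k) (cs ! l) \<subseteq> below (Suc l)"
  proof
    fix d assume "d \<in> IK I xs (Suc k) (cs ! l)"
    hence dI: "d \<in> I" and h: "d = cs ! l \<or> cprecK I xs (Suc k) d (cs ! l)"
      unfolding IK_def by auto
    have in_layer: "d \<in> layer p" if "p < length cs" "d = cs ! p \<or> cprecK I xs k d (cs ! p)" for p
      using that dI unfolding layer_def IK_def by auto
    have "\<exists>p<Suc l. d \<in> layer p"
    proof (cases "d = cs ! l \<or> cprecK I xs k d (cs ! l)")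
      case True
      then show ?thesis using in_layer l by blast
    next
      case False
      then obtain e where e: "e \<in> I" "d = e \<or> cprecK I xs k d e" "cprec xs e (cs ! l)"
          "xs ! k \<in> cvars e"
        using h by auto
      obtain p where p: "p < length cs" "e = cs ! p" using Ix_in_cs e by blast
      have "p < l" using cs_cprec_index[OF p(1) l] e(3) p(2) by simp
      moreover have "d \<in> layer p" using in_layer[of p] e(2) p by auto
      ultimately show ?thesis by (intro exI[of _ p]) simp
    qed
    then show "d \<in> below (Suc l)" unfolding below_def by blast
  qed
  show "below (Suc l) \<subseteq> IK I xs (Suc k) (cs ! l)"
  proof
    fix d assume "d \<in> below (Suc l)"
    then obtain p where p: "p \<le> l" "d \<in> layer p" unfolding below_def by (auto simp: less_Suc_eq_le)
    have dI: "d \<in> I" and dp: "d = cs ! p \<or> cprecK I xs k d (cs ! p)" using layer_mem[OF p(2)] by auto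
    show "d \<in> IK I xs (Suc k) (cs ! l)"
    proof (cases "p = l")
      case True then show ?thesis using dI dp unfolding IK_def by auto
    next
      case False
      hence "cprec xs (cs ! p) (cs ! l)" using cs_cprec l p(1) by simp
      hence "cprecK I xs (Suc k) d (cs ! l)"
        using dp cs_mem[of p] cs_mem[OF l] l p(1) by auto
      then show ?thesis using dI unfolding IK_def by auto
    qed
  qed
qed

end

theorem lemma8:
  fixes D :: "'d set" and I :: "('v, 'd) wconstr set" and xs :: "'v list"
    and k :: nat and cs :: "('v, 'd) wconstr list" and j :: nat and a :: "'v \<Rightarrow> 'd"
  assumes finD: "finite D"
    and finI: "finite I"
    and wfI: "\<forall>c\<in>I. wf_constr D c"
    and distinct_vars: "inj_on cvars I"
    and acyc: "beta_acyclic (varsI I) (hyp_edges I)"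
    and order: "beta_elim_order (varsI I) (hyp_edges I) xs"
    and k: "k < length xs"
    and cs_set: "set cs = Ix I (xs ! k)" and cs_dist: "distinct cs"
    and cs_chain: "\<forall>i. Suc i < length cs \<longrightarrow> cprec xs (cs ! i) (cs ! Suc i)"
    and j: "1 \<le> j" "j \<le> length cs"
    and a: "a \<in> (cvars (cs ! (j - 1)) - set (take k xs)) \<rightarrow>\<^sub>E D"
    and nz1: "\<forall>i < j. wJ D (IK I xs k (cs ! i) - {cs ! i})
                          (cvars (cs ! (j - 1)) - set (take k xs)) a \<noteq> 0"
    and nz2: "wJ D (IK I xs (Suc k) (cs ! (j - 1)) - set (take j cs))
                   (cvars (cs ! (j - 1)) - set (take k xs)) a \<noteq> 0"
  shows "(\<Prod>i < j. wJ D (IK I xs k (cs ! i)) (cvars (cs ! (j - 1)) - set (take k xs)) a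
                 / wJ D (IK I xs k (cs ! i) - {cs ! i}) (cvars (cs ! (j - 1)) - set (take k xs)) a)
         = wJ D (IK I xs (Suc k) (cs ! (j - 1))) (cvars (cs ! (j - 1)) - set (take k xs)) a
           / wJ D (IK I xs (Suc k) (cs ! (j - 1)) - set (take j cs))
                  (cvars (cs ! (j - 1)) - set (take k xs)) a"
proof -
  interpret nest_chain I xs k cs
    using distinct_vars order finI k cs_set cs_dist cs_chain by unfold_locales
  obtain l where jl: "j = Suc l" and l: "l < length cs" using j by (cases j) auto
  have "IK I xs (Suc k) (cs ! l) = below j"
    using IK_Suc_eq_below[OF l] jl by simp
  then show ?thesis
    using telescope[of j l "scope k (cs ! l)" D a] nz1 nz2 l
    unfolding jl layer_def by simp
qed

end
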